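(* Let $n>2k\ge2$ be integers and let $J(n,k)$ be the Johnson graph with vertex set $V$ the $k$-subsets of $[n]=\{1,\dots,n\}$, two vertices adjacent iff their intersection has size $k-1$; let $A$ be its adjacency matrix. Let $w_1\neq w_2$ be two vertices, $\gamma>0$, and $H=-\gamma A-|w_1\rangle\langle w_1|-|w_2\rangle\langle w_2|$ on $\mathcal{H}=\mathbb{C}^V$. Let $\mathcal{H}_{\mathrm{inv}}$ be the subspace of vectors $f\in\mathcal{H}$ such that $f(v)=f(v')$ whenever $|v\cap w_1\cap w_2|=|v'\cap w_1\cap w_2|$ and the multisets $\{|v\cap w_1|,|v\cap w_2|\}$ and $\{|v'\cap w_1|,|v'\cap w_2|\}$ coincide. Let $|\lambda\rangle\in\mathcal{H}_{\mathrm{inv}}$ be a nonzero vector with $H|\lambda\rangle=\lambda|\lambda\rangle$, and let $\alpha=\langle w_1|\lambda\rangle$ (which equals $\langle w_2|\lambda\rangle$). Then the following are equivalent: (i) $\lambda\in\sigma(-\gamma A)$; (ii) $-\gamma A|\lambda\rangle=\lambda|\lambda\rangle$; (iii) $\alpha=0$.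
   Context: $\{|v\rangle : v\in V\}$ is the computational basis; $\sigma(U)$ denotes the spectrum of $U$. *)

theory Defs
  imports Complex_Main "HOL-Library.Multiset"
begin

definition johnson_V :: "nat \<Rightarrow> nat \<Rightarrow> nat set set" where
  "johnson_V n k = {S. S \<subseteq> {1..n} \<and> card S = k}"

definition johnson_adj :: "nat \<Rightarrow> nat set \<Rightarrow> nat set \<Rightarrow> bool" where
  "johnson_adj k u v \<longleftrightarrow> card (u \<inter> v) = k - 1"

text \<open>Vectors in C^V are functions nat set => complex vanishing outside V.\<close>
definition is_vec :: "nat \<Rightarrow> nat \<Rightarrow> (nat set \<Rightarrow> complex) \<Rightarrow> bool" where
  "is_vec n k f \<longleftrightarrow> (\<forall>v. v \<notin> johnson_V n k \<longrightarrow> f v = 0)"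

definition adjA :: "nat \<Rightarrow> nat \<Rightarrow> (nat set \<Rightarrow> complex) \<Rightarrow> nat set \<Rightarrow> complex" where
  "adjA n k f v = (if v \<in> johnson_V n k
     then (\<Sum>u\<in>johnson_V n k. if johnson_adj k v u then f u else 0) else 0)"

definition hamH :: "nat \<Rightarrow> nat \<Rightarrow> real \<Rightarrow> nat set \<Rightarrow> nat set \<Rightarrow> (nat set \<Rightarrow> complex) \<Rightarrow> nat set \<Rightarrow> complex" where
  "hamH n k \<gamma> w1 w2 f v =
     - complex_of_real \<gamma> * adjA n k f v
     - (if v = w1 then f w1 else 0) - (if v = w2 then f w2 else 0)"

definition spec_mgA :: "nat \<Rightarrow> nat \<Rightarrow> real \<Rightarrow> complex set" where
  "spec_mgA n k \<gamma> = {\<mu>. \<exists>g. is_vec n k g \<and> g \<noteq> (\<lambda>_. 0) \<and>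
       (\<forall>v. - complex_of_real \<gamma> * adjA n k g v = \<mu> * g v)}"

definition in_Hinv :: "nat \<Rightarrow> nat \<Rightarrow> nat set \<Rightarrow> nat set \<Rightarrow> (nat set \<Rightarrow> complex) \<Rightarrow> bool" where
  "in_Hinv n k w1 w2 f \<longleftrightarrow> is_vec n k f \<and>
     (\<forall>v\<in>johnson_V n k. \<forall>v'\<in>johnson_V n k.
        card (v \<inter> w1 \<inter> w2) = card (v' \<inter> w1 \<inter> w2) \<and>
        {# card (v \<inter> w1), card (v \<inter> w2) #} = {# card (v' \<inter> w1), card (v' \<inter> w2) #}
        \<longrightarrow> f v = f v')"

end

theory Submission
  imports Defs
begin

text \<open>
  As w1 and w2 have the same invariants defining H_inv, f(w1) = f(w2) = \<alpha>, and the
  eigen-equation for H reads (-\<gamma>A - \<lambda>) f = \<alpha> (|w1\<rangle> + |w2\<rangle>); this gives (ii) \<longleftrightarrow> (iii) and (ii) \<Longrightarrow> (i).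
  For (i) \<Longrightarrow> (iii) let g be an eigenvector of -\<gamma>A for \<lambda>. Permutations \<sigma> of [n] act on J(n,k) by
  automorphisms, so g \<circ> \<sigma> is again an eigenvector, and pairing it with the equation above
  (A is symmetric) yields \<alpha> (g(\<sigma> w1) + g(\<sigma> w2)) = 0. The permutations are transitive on pairs of
  k-sets with intersection size c = |w1 \<inter> w2| < k, so if \<alpha> \<noteq> 0 then g(u) + g(u') = 0 whenever
  |u \<inter> u'| = c. As n > 2k, for any two adjacent vertices some vertex meets both in exactly c points,
  so g is constant on the connected graph J(n,k); then g(u) + g(u) = 0 forces g = 0.
\<close>

lemma ex_bij_betw_Un_extending:
  assumes "bij_betw f A C" and "bij_betw g B D" and "A \<inter> B = {}" and "C \<inter> D = {}"
  obtains \<sigma> where "bij_betw \<sigma> (A \<union> B) (C \<union> D)"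
    and "\<And>X. X \<subseteq> A \<Longrightarrow> \<sigma> ` X = f ` X" and "\<And>X. X \<subseteq> B \<Longrightarrow> \<sigma> ` X = g ` X"
proof
  let ?\<sigma> = "\<lambda>x. if x \<in> A then f x else g x"
  show "bij_betw ?\<sigma> (A \<union> B) (C \<union> D)"
    using assms by (rule bij_betw_disjoint_Un)
  show "?\<sigma> ` X = f ` X" if "X \<subseteq> A" for X
    using that by (intro image_cong) auto
  show "?\<sigma> ` X = g ` X" if "X \<subseteq> B" for X
    using that assms(3) by (intro image_cong) auto
qed

lemma ex_bij_betw_image_pair:
  assumes "finite S" and "finite T" and "A \<subseteq> S" and "B \<subseteq> S" and "C \<subseteq> T" and "D \<subseteq> T"
    and "card S = card T" and "card A = card C" and "card B = card D"
    and "card (A \<inter> B) = card (C \<inter> D)"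
  obtains \<sigma> where "bij_betw \<sigma> S T" and "\<sigma> ` A = C" and "\<sigma> ` B = D"
proof -
  have bij_of_card: "\<exists>h. bij_betw h X Y" if "X \<subseteq> S" "Y \<subseteq> T" "card X = card Y" for X Y
    using that assms(1,2) by (intro finite_same_card_bij) (auto intro: finite_subset)
  have fin: "finite A" "finite B" "finite C" "finite D"
    using assms finite_subset by blast+
  have "card (A - B) = card (C - D)" "card (B - A) = card (D - C)"
    using assms(8-10) fin by (simp_all add: card_Diff_subset_Int Int_commute)
  moreover have "card (S - (A \<union> B)) = card (T - (C \<union> D))"
    using assms card_Un_Int[of A B] card_Un_Int[of C D] fin
    by (simp add: card_Diff_subset)
  \<comment> \<open>\<sigma> is glued from bijections between corresponding Venn regions of A, B and of C, D.\<close>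
  ultimately obtain h1 h2 h3 h4 where
    h1: "bij_betw h1 (A \<inter> B) (C \<inter> D)" and h2: "bij_betw h2 (A - B) (C - D)"
    and h3: "bij_betw h3 (B - A) (D - C)" and h4: "bij_betw h4 (S - (A \<union> B)) (T - (C \<union> D))"
    using bij_of_card[of "A \<inter> B" "C \<inter> D"] bij_of_card[of "A - B" "C - D"]
      bij_of_card[of "B - A" "D - C"] bij_of_card[of "S - (A \<union> B)" "T - (C \<union> D)"] assms
    by blast
  obtain \<sigma>1 where \<sigma>1: "bij_betw \<sigma>1 (A \<inter> B \<union> (A - B)) (C \<inter> D \<union> (C - D))"
    and \<sigma>1_Int: "\<sigma>1 ` (A \<inter> B) = C \<inter> D"
    by (rule ex_bij_betw_Un_extending[OF h1 h2]) (use h1 in \<open>auto simp: bij_betw_def\<close>)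
  obtain \<sigma>2 where \<sigma>2: "bij_betw \<sigma>2 (B - A \<union> (S - (A \<union> B))) (D - C \<union> (T - (C \<union> D)))"
    and \<sigma>2_Diff: "\<sigma>2 ` (B - A) = D - C"
    by (rule ex_bij_betw_Un_extending[OF h3 h4]) (use h3 in \<open>auto simp: bij_betw_def\<close>)
  have "B - A \<union> (S - (A \<union> B)) = S - A" "D - C \<union> (T - (C \<union> D)) = T - C"
    using assms(4,6) by blast+
  then have \<sigma>2': "bij_betw \<sigma>2 (S - A) (T - C)" using \<sigma>2 by simp
  have \<sigma>1': "bij_betw \<sigma>1 A C" using \<sigma>1 by (simp add: Int_Diff_Un)
  obtain \<sigma> where \<sigma>: "bij_betw \<sigma> (A \<union> (S - A)) (C \<union> (T - C))"
    and \<sigma>_A: "\<And>X. X \<subseteq> A \<Longrightarrow> \<sigma> ` X = \<sigma>1 ` X" and \<sigma>_not_A: "\<And>X. X \<subseteq> S - A \<Longrightarrow> \<sigma> ` X = \<sigma>2 ` X"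
    by (rule ex_bij_betw_Un_extending[OF \<sigma>1' \<sigma>2']) auto
  show thesis
  proof
    show "bij_betw \<sigma> S T" using \<sigma> assms(3,5) by (simp add: Un_absorb1)
    show "\<sigma> ` A = C" using \<sigma>_A[of A] \<sigma>1' by (simp add: bij_betw_def)
    have "B = A \<inter> B \<union> (B - A)" by blast
    then have "\<sigma> ` B = \<sigma>1 ` (A \<inter> B) \<union> \<sigma>2 ` (B - A)"
      using \<sigma>_A[of "A \<inter> B"] \<sigma>_not_A[of "B - A"] assms(4) by (metis Diff_mono Int_lower1 image_Un order_refl)
    then show "\<sigma> ` B = D" using \<sigma>1_Int \<sigma>2_Diff by auto
  qed
qed

lemma finite_johnson_V: "finite (johnson_V n k)"
  by (rule finite_subset[of _ "Pow {1..n}"]) (auto simp: johnson_V_def)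

lemma bij_betw_image_johnson_V:
  assumes "bij_betw \<sigma> {1..n} {1..n}"
  shows "bij_betw (image \<sigma>) (johnson_V n k) (johnson_V n k)"
proof -
  have inj: "inj_on \<sigma> {1..n}" and onto: "\<sigma> ` {1..n} = {1..n}"
    using assms by (auto simp: bij_betw_def)
  have "bij_betw (image \<sigma>) (Pow {1..n}) (Pow {1..n})"
    using bij_betw_Pow[OF assms] .
  then have inj_V: "inj_on (image \<sigma>) (johnson_V n k)"
    by (rule bij_betw_imp_inj_on[THEN inj_on_subset]) (auto simp: johnson_V_def)
  have "image \<sigma> ` johnson_V n k \<subseteq> johnson_V n k"
    using inj onto by (auto simp: johnson_V_def card_image inj_on_subset)
  with inj_V show ?thesis
    by (simp add: bij_betw_def endo_inj_surj finite_johnson_V)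
qed

lemma johnson_adj_image:
  assumes "inj_on \<sigma> {1..n}" and "u \<in> johnson_V n k" and "v \<in> johnson_V n k"
  shows "johnson_adj k (\<sigma> ` u) (\<sigma> ` v) \<longleftrightarrow> johnson_adj k u v"
proof -
  have "u \<subseteq> {1..n}" "v \<subseteq> {1..n}" using assms(2,3) by (auto simp: johnson_V_def)
  then have "\<sigma> ` u \<inter> \<sigma> ` v = \<sigma> ` (u \<inter> v)" and "inj_on \<sigma> (u \<inter> v)"
    using assms(1) by (auto simp: inj_on_image_Int intro: inj_on_subset)
  then show ?thesis by (simp add: johnson_adj_def card_image)
qed

lemma adjA_comp_image:
  assumes "bij_betw \<sigma> {1..n} {1..n}" and "v \<in> johnson_V n k"
  shows "adjA n k (\<lambda>u. g (\<sigma> ` u)) v = adjA n k g (\<sigma> ` v)"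
proof -
  let ?V = "johnson_V n k"
  have bij_V: "bij_betw (image \<sigma>) ?V ?V" using assms(1) by (rule bij_betw_image_johnson_V)
  have "adjA n k (\<lambda>u. g (\<sigma> ` u)) v
      = (\<Sum>u\<in>?V. if johnson_adj k (\<sigma> ` v) (\<sigma> ` u) then g (\<sigma> ` u) else 0)"
    using assms johnson_adj_image[of \<sigma> n v k] by (simp add: adjA_def bij_betw_def)
  also have "\<dots> = (\<Sum>u\<in>?V. if johnson_adj k (\<sigma> ` v) u then g u else 0)"
    by (rule sum.reindex_bij_betw[OF bij_V])
  also have "\<dots> = adjA n k g (\<sigma> ` v)"
    using bij_betw_apply[OF bij_V assms(2)] by (simp add: adjA_def)
  finally show ?thesis .
qed

lemma sum_mult_adjA_commute:
  "(\<Sum>v\<in>johnson_V n k. h v * adjA n k f v) = (\<Sum>v\<in>johnson_V n k. adjA n k h v * f v)"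
proof -
  let ?V = "johnson_V n k"
  have "(\<Sum>v\<in>?V. h v * adjA n k f v)
      = (\<Sum>v\<in>?V. \<Sum>u\<in>?V. if johnson_adj k v u then h v * f u else 0)"
    by (auto simp: adjA_def sum_distrib_left intro!: sum.cong)
  also have "\<dots> = (\<Sum>u\<in>?V. \<Sum>v\<in>?V. if johnson_adj k v u then h v * f u else 0)"
    by (rule sum.swap)
  also have "\<dots> = (\<Sum>v\<in>?V. adjA n k h v * f v)"
    by (auto simp: adjA_def sum_distrib_right johnson_adj_def Int_commute intro!: sum.cong)
  finally show ?thesis .
qed

lemma eigenvector_sum_at_perturbation_eq_zero:
  assumes "w1 \<in> johnson_V n k" and "w2 \<in> johnson_V n k" and "w1 \<noteq> w2" and "\<alpha> \<noteq> 0"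
    and f: "\<forall>v. c * adjA n k f v = lam * f v + (if v = w1 then \<alpha> else 0) + (if v = w2 then \<alpha> else 0)"
    and h: "\<forall>v\<in>johnson_V n k. c * adjA n k h v = lam * h v"
  shows "h w1 + h w2 = 0"
proof -
  let ?V = "johnson_V n k"
  have "(\<Sum>v\<in>?V. h v * (if v = w then \<alpha> else 0)) = h w * \<alpha>" if "w \<in> ?V" for w
  proof -
    have "(\<Sum>v\<in>?V. h v * (if v = w then \<alpha> else 0)) = (\<Sum>v\<in>?V. if v = w then h w * \<alpha> else 0)"
      by (rule sum.cong) auto
    then show ?thesis using that by (simp add: finite_johnson_V)
  qed
  then have delta: "(\<Sum>v\<in>?V. h v * ((if v = w1 then \<alpha> else 0) + (if v = w2 then \<alpha> else 0)))
      = (h w1 + h w2) * \<alpha>"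
    using assms(1,2) by (simp add: distrib_left sum.distrib algebra_simps)
  have "(\<Sum>v\<in>?V. lam * h v * f v) = (\<Sum>v\<in>?V. c * adjA n k h v * f v)"
    using h by simp
  also have "\<dots> = c * (\<Sum>v\<in>?V. adjA n k h v * f v)"
    by (simp add: sum_distrib_left mult.assoc)
  also have "\<dots> = c * (\<Sum>v\<in>?V. h v * adjA n k f v)"
    by (simp add: sum_mult_adjA_commute)
  also have "\<dots> = (\<Sum>v\<in>?V. h v * (c * adjA n k f v))"
    by (simp add: sum_distrib_left mult.left_commute)
  also have "\<dots> = (\<Sum>v\<in>?V. lam * h v * f v
      + h v * ((if v = w1 then \<alpha> else 0) + (if v = w2 then \<alpha> else 0)))"
    using f by (intro sum.cong) (simp_all add: algebra_simps)
  also have "\<dots> = (\<Sum>v\<in>?V. lam * h v * f v) + (h w1 + h w2) * \<alpha>"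
    by (simp add: sum.distrib delta)
  finally show ?thesis using \<open>\<alpha> \<noteq> 0\<close> by simp
qed

lemma ex_permutation_johnson_V_pair:
  assumes "w1 \<in> johnson_V n k" and "w2 \<in> johnson_V n k" and "u1 \<in> johnson_V n k" and "u2 \<in> johnson_V n k"
    and "card (u1 \<inter> u2) = card (w1 \<inter> w2)"
  obtains \<sigma> where "bij_betw \<sigma> {1..n} {1..n}" and "\<sigma> ` w1 = u1" and "\<sigma> ` w2 = u2"
  by (rule ex_bij_betw_image_pair[of "{1..n}" "{1..n}" w1 w2 u1 u2])
    (use assms in \<open>auto simp: johnson_V_def\<close>)

lemma johnson_V_connected:
  assumes adj: "\<And>u v. u \<in> johnson_V n k \<Longrightarrow> v \<in> johnson_V n k \<Longrightarrow> johnson_adj k u v \<Longrightarrow> g u = g v"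
    and "u \<in> johnson_V n k" and "v \<in> johnson_V n k"
  shows "g u = g v"
  using assms(2,3)
proof (induction "card (u - v)" arbitrary: u)
  case 0
  then have "finite u" "finite v" "card u = card v"
    by (auto simp: johnson_V_def intro: finite_subset)
  with 0 have "u = v" by (metis Diff_eq_empty_iff card_0_eq card_subset_eq finite_Diff)
  then show ?case by simp
next
  case (Suc m)
  have fin: "finite u" "finite v" and card: "card u = k" "card v = k"
    using Suc.prems by (auto simp: johnson_V_def intro: finite_subset)
  then have "card (v - u) = Suc m"
    using Suc.hyps(2) by (simp add: card_Diff_subset_Int Int_commute)
  then obtain x y where x: "x \<in> u - v" and y: "y \<in> v - u"
    using Suc.hyps(2) by (metis card_0_eq ex_in_conv fin finite_Diff nat.distinct(1))
  define u' where "u' = insert y (u - {x})"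
  have "card (u - {x}) = k - 1" "0 < k"
    using x fin card by (auto simp: card_gt_0_iff)
  then have u': "u' \<in> johnson_V n k"
    using Suc.prems x y fin by (auto simp: u'_def johnson_V_def)
  have "u \<inter> u' = u - {x}" using x y by (auto simp: u'_def)
  then have "johnson_adj k u u'" using x fin card by (simp add: johnson_adj_def)
  moreover have "u' - v = (u - v) - {x}" using x y by (auto simp: u'_def)
  then have "m = card (u' - v)" using Suc.hyps(2) x fin by simp
  ultimately show ?case using Suc.hyps(1) adj Suc.prems u' by metis
qed

lemma ex_johnson_V_meeting_pair:
  assumes "u \<in> johnson_V n k" and "v \<in> johnson_V n k"
    and "c \<le> card (u \<inter> v)" and "card (u \<union> v) + (k - c) \<le> n"
  obtains x where "x \<in> johnson_V n k" and "card (x \<inter> u) = c" and "card (x \<inter> v) = c"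
proof -
  have sub: "u \<subseteq> {1..n}" "v \<subseteq> {1..n}" and card: "card u = k"
    using assms(1,2) by (auto simp: johnson_V_def)
  then have fin: "finite u" "finite v" by (auto intro: finite_subset)
  obtain C where C: "C \<subseteq> u \<inter> v" "card C = c"
    using obtain_subset_with_card_n[OF assms(3)] by metis
  have "card ({1..n} - (u \<union> v)) = n - card (u \<union> v)"
    using sub fin by (simp add: card_Diff_subset)
  then have "k - c \<le> card ({1..n} - (u \<union> v))"
    using assms(4) by linarith
  then obtain E where E: "E \<subseteq> {1..n} - (u \<union> v)" "card E = k - c"
    by (metis obtain_subset_with_card_n)
  have "c \<le> k" using assms(3) card fin card_mono[of u "u \<inter> v"] by simp
  show thesis
  proof
    have "finite C" "finite E" "C \<inter> E = {}" using C E fin by (auto intro: finite_subset)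
    then show "C \<union> E \<in> johnson_V n k"
      using C E sub \<open>c \<le> k\<close> by (auto simp: johnson_V_def card_Un_disjoint)
    have "(C \<union> E) \<inter> u = C" "(C \<union> E) \<inter> v = C"
      using C E by blast+
    then show "card ((C \<union> E) \<inter> u) = c" "card ((C \<union> E) \<inter> v) = c"
      using C by simp_all
  qed
qed

lemma johnson_V_eq_zero_if_sums_vanish:
  fixes g :: "nat set \<Rightarrow> 'a::field_char_0"
  assumes "c < k" and "2 * k < n"
    and sums: "\<And>u u'. u \<in> johnson_V n k \<Longrightarrow> u' \<in> johnson_V n k \<Longrightarrow> card (u \<inter> u') = c
      \<Longrightarrow> g u + g u' = 0"
    and u: "u \<in> johnson_V n k"
  shows "g u = 0"
proof -
  have const: "g v = g v'" if "v \<in> johnson_V n k" "v' \<in> johnson_V n k" for v v'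
  proof (rule johnson_V_connected[OF _ that])
    fix v v' assume vv': "v \<in> johnson_V n k" "v' \<in> johnson_V n k" "johnson_adj k v v'"
    then have "finite v" "finite v'" "card v = k" "card v' = k"
      by (auto simp: johnson_V_def intro: finite_subset)
    then have "card (v \<union> v') = k + 1"
      using vv'(3) card_Un_Int[of v v'] assms(1) by (simp add: johnson_adj_def)
    then have "card (v \<union> v') + (k - c) \<le> n" and "c \<le> card (v \<inter> v')"
      using vv'(3) assms(1,2) by (simp_all add: johnson_adj_def)
    then obtain x where x: "x \<in> johnson_V n k" "card (x \<inter> v) = c" "card (x \<inter> v') = c"
      using ex_johnson_V_meeting_pair[OF vv'(1,2)] by blast
    then show "g v = g v'"
      using sums[OF x(1) vv'(1)] sums[OF x(1) vv'(2)] by (metis add_left_cancel)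
  qed
  have "card u = k" using u by (simp add: johnson_V_def)
  then have "c \<le> card (u \<inter> u)" "card (u \<union> u) + (k - c) \<le> n"
    using assms(1,2) by simp_all
  then obtain x where "x \<in> johnson_V n k" "card (x \<inter> u) = c"
    using ex_johnson_V_meeting_pair[OF u u] by blast
  then have "g u + g u = 0" using sums[of x u] const[of x u] u by simp
  then show ?thesis by simp
qed

lemma eigenvector_eq_zero_if_perturbed_eigenvector:
  assumes "2 * k < n" and w: "w1 \<in> johnson_V n k" "w2 \<in> johnson_V n k" "w1 \<noteq> w2" and "\<alpha> \<noteq> 0"
    and f: "\<forall>v. c * adjA n k f v = lam * f v + (if v = w1 then \<alpha> else 0) + (if v = w2 then \<alpha> else 0)"
    and g: "\<forall>v\<in>johnson_V n k. c * adjA n k g v = lam * g v"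
    and u: "u \<in> johnson_V n k"
  shows "g u = 0"
proof -
  have "finite w1" "finite w2" "card w1 = card w2"
    using w(1,2) by (auto simp: johnson_V_def intro: finite_subset)
  then have "\<not> w1 \<subseteq> w2" using w(3) card_subset_eq by metis
  then have "card (w1 \<inter> w2) < card w1"
    using \<open>finite w1\<close> by (intro psubset_card_mono) auto
  then have "card (w1 \<inter> w2) < k" using w(1) by (simp add: johnson_V_def)
  then show ?thesis
  proof (rule johnson_V_eq_zero_if_sums_vanish[OF _ assms(1) _ u])
    fix u1 u2 assume "u1 \<in> johnson_V n k" "u2 \<in> johnson_V n k" "card (u1 \<inter> u2) = card (w1 \<inter> w2)"
    then obtain \<sigma> where \<sigma>: "bij_betw \<sigma> {1..n} {1..n}" "\<sigma> ` w1 = u1" "\<sigma> ` w2 = u2"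
      using ex_permutation_johnson_V_pair w(1,2) by metis
    have "\<forall>v\<in>johnson_V n k. c * adjA n k (\<lambda>v. g (\<sigma> ` v)) v = lam * g (\<sigma> ` v)"
      using g adjA_comp_image[OF \<sigma>(1)] bij_betw_apply[OF bij_betw_image_johnson_V[OF \<sigma>(1)]] by simp
    then have "g (\<sigma> ` w1) + g (\<sigma> ` w2) = 0"
      by (rule eigenvector_sum_at_perturbation_eq_zero[OF w \<open>\<alpha> \<noteq> 0\<close> f])
    then show "g u1 + g u2 = 0" using \<sigma> by simp
  qed
qed

lemma perturbation_eq_zero_if_in_spec_mgA:
  assumes "2 * k < n" and "w1 \<in> johnson_V n k" and "w2 \<in> johnson_V n k" and "w1 \<noteq> w2"
    and f: "\<forall>v. - complex_of_real \<gamma> * adjA n k f v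
      = lam * f v + (if v = w1 then \<alpha> else 0) + (if v = w2 then \<alpha> else 0)"
    and "lam \<in> spec_mgA n k \<gamma>"
  shows "\<alpha> = 0"
proof (rule ccontr)
  assume "\<alpha> \<noteq> 0"
  obtain g where g: "is_vec n k g" "g \<noteq> (\<lambda>_. 0)"
    "\<forall>v. - complex_of_real \<gamma> * adjA n k g v = lam * g v"
    using \<open>lam \<in> spec_mgA n k \<gamma>\<close> unfolding spec_mgA_def by blast
  have "g v = 0" for v
    using eigenvector_eq_zero_if_perturbed_eigenvector[OF assms(1-4) \<open>\<alpha> \<noteq> 0\<close> f, of g v]
      g(1,3) unfolding is_vec_def by blast
  with g(2) show False by auto
qed

lemma in_Hinv_eq_at_w1_w2:
  assumes "in_Hinv n k w1 w2 f" and "w1 \<in> johnson_V n k" and "w2 \<in> johnson_V n k"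
  shows "f w1 = f w2"
proof -
  have "card (w1 \<inter> w1 \<inter> w2) = card (w2 \<inter> w1 \<inter> w2)"
    and "{# card (w1 \<inter> w1), card (w1 \<inter> w2) #} = {# card (w2 \<inter> w1), card (w2 \<inter> w2) #}"
    using assms(2,3) by (simp_all add: johnson_V_def Int_commute Int_left_commute add_mset_commute)
  then show ?thesis using assms unfolding in_Hinv_def by blast
qed

theorem proposition5:
  fixes n k :: nat and \<gamma> :: real and w1 w2 :: "nat set"
    and f :: "nat set \<Rightarrow> complex" and lam :: complex
  assumes "2 \<le> 2 * k" and "2 * k < n"
    and "w1 \<in> johnson_V n k" and "w2 \<in> johnson_V n k" and "w1 \<noteq> w2"
    and "\<gamma> > 0"
    and "in_Hinv n k w1 w2 f" and "f \<noteq> (\<lambda>_. 0)"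
    and "\<forall>v. hamH n k \<gamma> w1 w2 f v = lam * f v"
  shows "(lam \<in> spec_mgA n k \<gamma> \<longleftrightarrow> (\<forall>v. - complex_of_real \<gamma> * adjA n k f v = lam * f v))
       \<and> ((\<forall>v. - complex_of_real \<gamma> * adjA n k f v = lam * f v) \<longleftrightarrow> f w1 = 0)"
proof -
  have "f w1 = f w2" using assms(7,3,4) by (rule in_Hinv_eq_at_w1_w2)
  then have perturbed: "\<forall>v. - complex_of_real \<gamma> * adjA n k f v
      = lam * f v + (if v = w1 then f w1 else 0) + (if v = w2 then f w1 else 0)"
    using assms(9) by (simp add: hamH_def algebra_simps)
  have unperturbed_iff: "(\<forall>v. - complex_of_real \<gamma> * adjA n k f v = lam * f v) \<longleftrightarrow> f w1 = 0"
  proof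
    assume "\<forall>v. - complex_of_real \<gamma> * adjA n k f v = lam * f v"
    then show "f w1 = 0" using perturbed[rule_format, of w1] assms(5) by simp
  qed (use perturbed in simp)
  moreover have "lam \<in> spec_mgA n k \<gamma> \<longleftrightarrow> f w1 = 0"
  proof
    assume "lam \<in> spec_mgA n k \<gamma>"
    then show "f w1 = 0" by (rule perturbation_eq_zero_if_in_spec_mgA[OF assms(2-5) perturbed])
  next
    assume "f w1 = 0"
    then show "lam \<in> spec_mgA n k \<gamma>"
      using unperturbed_iff assms(7,8) unfolding spec_mgA_def in_Hinv_def by blast
  qed
  ultimately show ?thesis by blast
qed

end
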